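(* Consider the scenario of three two-outcome measurements $1,2,3$, each pair of which is compatible, and Specker's behaviour in which, for each pair $(i,j)\in\{(1,2),(2,3),(3,1)\}$, $P(00\mid ij)=P(11\mid ij)=0$ and $P(01\mid ij)=P(10\mid ij)=\tfrac12$. Then the product of two statistically independent copies of this behaviour violates the exclusivity principle: there is a set of pairwise mutually exclusive events of the two-copy experiment whose probabilities sum to more than $1$. The same holds for Wright's behaviour on five two-outcome measurements $1,\dots,5$ with $i$ and $i+1 \pmod 5$ compatible, defined by $P(00\mid i,i+1)=P(11\mid i,i+1)=0$, $P(01\mid i,i+1)=P(10\mid i,i+1)=\tfrac12$.
   Context: $P(a b\mid i j)$ denotes the probability of outcomes $a$ for measurement $i$ and $b$ for measurement $j$. Two events are mutually exclusive if they assign different outcomes to a common measurement. In the joint experiment of two statistically independent copies, events are pairs $(e,e')$ with probability $P(e)P(e')$, and $(e,e')$, $(f,f')$ are mutually exclusive iff $e,f$ are exclusive or $e',f'$ are exclusive. The exclusivity principle: the probabilities of any set of pairwise mutually exclusive events sum to at most $1$. *)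

theory Defs
  imports Main "HOL-Analysis.Analysis"
begin

text \<open>An event of a single experiment: a context (an ordered pair of compatible
measurements (i,j)) together with outcomes (a,b), standing for "a for i and b for j".
A behaviour is a set of contexts together with P(a b | i j).\<close>

type_synonym event = "(nat \<times> nat) \<times> (nat \<times> nat)"

definition assigns :: "event \<Rightarrow> nat \<Rightarrow> nat \<Rightarrow> bool" where
  "assigns e m r \<longleftrightarrow>
     (fst (fst e) = m \<and> fst (snd e) = r) \<or> (snd (fst e) = m \<and> snd (snd e) = r)"

definition exclusive :: "event \<Rightarrow> event \<Rightarrow> bool" where
  "exclusive e f \<longleftrightarrow> (\<exists>m r r'. assigns e m r \<and> assigns f m r' \<and> r \<noteq> r')"

definition events :: "(nat \<times> nat) set \<Rightarrow> event set" where
  "events C = {e. fst e \<in> C \<and> fst (snd e) \<in> {0,1} \<and> snd (snd e) \<in> {0,1}}"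

definition exclusive2 :: "event \<times> event \<Rightarrow> event \<times> event \<Rightarrow> bool" where
  "exclusive2 x y \<longleftrightarrow> exclusive (fst x) (fst y) \<or> exclusive (snd x) (snd y)"

definition two_copies_violate_EP :: "(nat \<times> nat) set \<Rightarrow> (event \<Rightarrow> real) \<Rightarrow> bool" where
  "two_copies_violate_EP C P \<longleftrightarrow>
     (\<exists>S. finite S \<and> S \<subseteq> events C \<times> events C \<and>
          (\<forall>x\<in>S. \<forall>y\<in>S. x \<noteq> y \<longrightarrow> exclusive2 x y) \<and>
          (\<Sum>x\<in>S. P (fst x) * P (snd x)) > 1)"

definition anticorr :: "event \<Rightarrow> real" where
  "anticorr e = (if fst (snd e) \<noteq> snd (snd e) then 1/2 else 0)"

definition specker_contexts :: "(nat \<times> nat) set" where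
  "specker_contexts = {(1,2), (2,3), (3,1)}"

definition wright_contexts :: "(nat \<times> nat) set" where
  "wright_contexts = {(1,2), (2,3), (3,4), (4,5), (5,1)}"

end

theory Submission
  imports Defs
begin

text \<open>Every event below has probability 1/2, so every pair of events has probability 1/4 in the
  two-copy experiment, and five pairwise exclusive pairs already have total probability 5/4.
  For Specker's behaviour the two anticorrelated outcomes of context (1,2) exclude each other
  in either copy, which suffices to arrange five such pairs.
  For Wright's behaviour the events "0 for k+1, 1 for k+2" (indices mod 5) are exclusive exactly
  for neighbouring k in the pentagon, and pairing event k with event 2k mod 5 yields five pairs
  any two of which are neighbours in the first or in the second copy.\<close>

lemma exclusive_iff:
  "exclusive ((i,j),(a,b)) ((k,l),(c,d)) \<longleftrightarrow>
    (i = k \<and> a \<noteq> c) \<or> (i = l \<and> a \<noteq> d) \<or> (j = k \<and> b \<noteq> c) \<or> (j = l \<and> b \<noteq> d)"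
  unfolding exclusive_def assigns_def by auto

lemma events_iff: "((i,j),(a,b)) \<in> events C \<longleftrightarrow> (i,j) \<in> C \<and> a \<in> {0,1} \<and> b \<in> {0,1}"
  unfolding events_def by auto

lemma two_copies_violate_EP_if_constant_weight:
  fixes q :: real
  assumes "finite S" "S \<subseteq> events C \<times> events C" "pairwise exclusive2 S"
    and "\<And>x. x \<in> S \<Longrightarrow> P (fst x) * P (snd x) = q" "card S * q > 1"
  shows "two_copies_violate_EP C P"
  unfolding two_copies_violate_EP_def
proof (intro exI conjI)
  show "(\<Sum>x\<in>S. P (fst x) * P (snd x)) > 1"
    using assms(4,5) by simp
qed (use assms(1-3) in \<open>auto simp: pairwise_def\<close>)

definition specker_witness :: "(event \<times> event) set" where
  "specker_witness =
     {(((1,2),(0,1)), ((1,2),(0,1))), (((1,2),(0,1)), ((1,2),(1,0))),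
      (((1,2),(1,0)), ((1,2),(0,1))), (((1,2),(1,0)), ((2,3),(0,1))),
      (((1,2),(1,0)), ((3,1),(0,1)))}"

lemma specker_two_copies_violate_EP: "two_copies_violate_EP specker_contexts anticorr"
proof (rule two_copies_violate_EP_if_constant_weight[where S = specker_witness and q = "1/4"])
  show "pairwise exclusive2 specker_witness"
    by (simp add: specker_witness_def pairwise_def exclusive2_def exclusive_iff)
qed (auto simp: specker_witness_def events_iff specker_contexts_def anticorr_def)

definition wright_event :: "nat \<Rightarrow> event" where
  "wright_event k = ((Suc k, Suc (Suc k mod 5)), (0,1))"

definition pentagon_adjacent :: "nat \<Rightarrow> nat \<Rightarrow> bool" where
  "pentagon_adjacent k l \<longleftrightarrow> Suc k mod 5 = l \<or> Suc l mod 5 = k"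

lemma less_five_cases:
  assumes "k < (5::nat)"
  obtains "k = 0" | "k = 1" | "k = 2" | "k = 3" | "k = 4"
  using assms by linarith

lemma exclusive_wright_event:
  assumes "k < 5" "l < 5"
  shows "exclusive (wright_event k) (wright_event l) \<longleftrightarrow> pentagon_adjacent k l"
  using assms(1) by (cases rule: less_five_cases; use assms(2) in \<open>cases rule: less_five_cases\<close>)
    (simp_all add: wright_event_def pentagon_adjacent_def exclusive_iff)

lemma pentagon_doubling_adjacent:
  assumes "k < 5" "l < 5" "k \<noteq> l"
  shows "pentagon_adjacent k l \<or> pentagon_adjacent (2*k mod 5) (2*l mod 5)"
  using assms(1) by (cases rule: less_five_cases; use assms(2,3) in \<open>cases rule: less_five_cases\<close>)
    (simp_all add: pentagon_adjacent_def)

lemma wright_event_in_events: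
  assumes "k < 5"
  shows "wright_event k \<in> events wright_contexts"
  using assms by (cases rule: less_five_cases)
    (simp_all add: wright_event_def events_iff wright_contexts_def)

lemma anticorr_wright_event: "anticorr (wright_event k) = 1/2"
  by (simp add: wright_event_def anticorr_def)

definition wright_witness :: "(event \<times> event) set" where
  "wright_witness = (\<lambda>k. (wright_event k, wright_event (2*k mod 5))) ` {..<5}"

lemma card_wright_witness: "card wright_witness = 5"
proof -
  have "inj_on (\<lambda>k. (wright_event k, wright_event (2*k mod 5))) {..<5}"
    by (rule inj_onI) (simp add: wright_event_def)
  then show ?thesis
    unfolding wright_witness_def by (simp add: card_image)
qed

lemma wright_two_copies_violate_EP: "two_copies_violate_EP wright_contexts anticorr"
proof (rule two_copies_violate_EP_if_constant_weight[where S = wright_witness and q = "1/4"])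
  show "pairwise exclusive2 wright_witness"
    unfolding wright_witness_def
  proof (rule pairwise_imageI)
    fix k l :: nat
    assume "k \<in> {..<5}" "l \<in> {..<5}" "k \<noteq> l"
    then show "exclusive2 (wright_event k, wright_event (2*k mod 5))
                          (wright_event l, wright_event (2*l mod 5))"
      using pentagon_doubling_adjacent[of k l]
      by (auto simp: exclusive2_def exclusive_wright_event)
  qed
  show "wright_witness \<subseteq> events wright_contexts \<times> events wright_contexts"
    unfolding wright_witness_def using wright_event_in_events by auto
  show "card wright_witness * (1/4) > (1::real)"
    by (simp add: card_wright_witness)
qed (auto simp: wright_witness_def anticorr_wright_event)

theorem mainTheorem7:
  shows "two_copies_violate_EP specker_contexts anticorr \<and>
         two_copies_violate_EP wright_contexts anticorr"
  using specker_two_copies_violate_EP wright_two_copies_violate_EP by blast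

end
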